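(* There exists a countable nilpotent group $G$ of nilpotency class $2$ such that the subgroup conjugacy relation of $G$ on $\mathrm{Sub}(G)$ is not smooth.
   Context: For a countable group $G$, $\mathrm{Sub}(G)$ is the set of subgroups of $G$ with the (Polish) topology inherited from $2^G=\{0,1\}^G$. The subgroup conjugacy relation is the equivalence relation on $\mathrm{Sub}(G)$ given by $H\sim L$ iff $gHg^{-1}=L$ for some $g\in G$. A Borel equivalence relation $E$ on a standard Borel space $X$ is smooth if there is a Borel map $f$ from $X$ to a standard Borel space with $x\mathrel{E}y\iff f(x)=f(y)$. *)

theory Defs
  imports "HOL-Analysis.Analysis" "HOL-Algebra.Algebra"
begin

definition grp_commutator :: "('a, 'b) monoid_scheme \<Rightarrow> 'a \<Rightarrow> 'a \<Rightarrow> 'a" where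
  "grp_commutator G x y = x \<otimes>\<^bsub>G\<^esub> y \<otimes>\<^bsub>G\<^esub> inv\<^bsub>G\<^esub> x \<otimes>\<^bsub>G\<^esub> inv\<^bsub>G\<^esub> y"

text \<open>Lower central series, indexed from 0: lcs G 0 = G (= gamma_1),
  lcs G (Suc n) = [lcs G n, G] (= gamma_(n+2)).\<close>
fun lcs :: "('a, 'b) monoid_scheme \<Rightarrow> nat \<Rightarrow> 'a set" where
  "lcs G 0 = carrier G"
| "lcs G (Suc n) = generate G {grp_commutator G x y | x y. x \<in> lcs G n \<and> y \<in> carrier G}"

definition nilpotent_of_class :: "('a, 'b) monoid_scheme \<Rightarrow> nat \<Rightarrow> bool" where
  "nilpotent_of_class G c \<longleftrightarrow> group G \<and> lcs G c = {\<one>\<^bsub>G\<^esub>} \<and> (\<forall>k<c. lcs G k \<noteq> {\<one>\<^bsub>G\<^esub>})"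

text \<open>Sub(G) for a group whose carrier is a subset of nat, embedded in 2^nat via indicator
  functions (coordinates outside carrier G are constantly False, so this is homeomorphic
  to Sub(G) as a subspace of 2^G).\<close>
definition Sub_space :: "(nat, 'b) monoid_scheme \<Rightarrow> (nat \<Rightarrow> bool) set" where
  "Sub_space G = {(\<lambda>n. n \<in> H) | H. subgroup H G}"

definition Sub_measurable :: "(nat, 'b) monoid_scheme \<Rightarrow> (nat \<Rightarrow> bool) measure" where
  "Sub_measurable G = restrict_space (borel :: (nat \<Rightarrow> bool) measure) (Sub_space G)"

definition subgroup_conj :: "(nat, 'b) monoid_scheme \<Rightarrow> (nat \<Rightarrow> bool) \<Rightarrow> (nat \<Rightarrow> bool) \<Rightarrow> bool" where
  "subgroup_conj G x y \<longleftrightarrow> (\<exists>g\<in>carrier G.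
      (\<lambda>h. g \<otimes>\<^bsub>G\<^esub> h \<otimes>\<^bsub>G\<^esub> inv\<^bsub>G\<^esub> g) ` {n. x n} = {n. y n})"

text \<open>Smoothness: a Borel reduction to the standard Borel space R (every standard Borel
  space Borel-embeds into R, so this is the usual notion).\<close>
definition smooth_on :: "'a measure \<Rightarrow> ('a \<Rightarrow> 'a \<Rightarrow> bool) \<Rightarrow> bool" where
  "smooth_on M E \<longleftrightarrow> (\<exists>f \<in> measurable M (borel :: real measure).
      \<forall>x\<in>space M. \<forall>y\<in>space M. E x y \<longleftrightarrow> f x = f y)"

end

theory Submission
  imports Defs "HOL-Probability.Probability" "HOL-Library.Nat_Bijection"
begin

(* The group is the Heisenberg group over the Boolean ring of finite subsets of the naturals
   (addition is symmetric difference, multiplication is intersection); it is countable and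
   nilpotent of class 2. For x in 2^N the "graph" H_x = {(0, b, b \<inter> x)} is a subgroup, and
   conjugating by (a, _, _) turns H_x into H_(x \<Delta> a). So H_x and H_y are conjugate iff x and y
   differ in finitely many places, and x \<mapsto> H_x is a Borel reduction of E_0 to subgroup
   conjugacy. E_0 is not smooth: a Borel E_0-invariant real function is almost surely constant
   for the fair coin-flip measure by Kolmogorov's 0-1 law, whereas every E_0-class is countable
   and hence null. *)

(* Needed for sets_PiM_equal_borel: the Borel sets of 2^N form the product sigma-algebra. *)
instance bool :: second_countable_topology
proof
  let ?B = "range (\<lambda>b::bool. {b})"
  have "generate_topology ?B (\<Union>b\<in>S. {b})" for S
    by (rule generate_topology_Union) (auto intro: generate_topology.Basis)
  then have "open = generate_topology ?B"
    by (simp add: fun_eq_iff discrete_topology_class.open_discrete)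
  then show "\<exists>B::bool set set. countable B \<and> open = generate_topology B" by blast
qed

lemma sets_borel_cantor:
  "sets (borel :: (nat \<Rightarrow> bool) measure) = sets (\<Pi>\<^sub>M i\<in>UNIV. count_space UNIV)"
proof -
  have "sets (\<Pi>\<^sub>M i\<in>UNIV. count_space UNIV) = sets (Pi\<^sub>M (UNIV :: nat set) (\<lambda>_. borel :: bool measure))"
    by (rule sets_PiM_cong) (simp_all add: sets_borel_eq_count_space)
  then show ?thesis by (simp add: sets_PiM_equal_borel)
qed

lemma smooth_on_pullback:
  assumes \<phi>: "\<phi> \<in> measurable M N"
    and reduction: "\<And>x y. x \<in> space M \<Longrightarrow> y \<in> space M \<Longrightarrow> E (\<phi> x) (\<phi> y) \<longleftrightarrow> F x y"
    and "smooth_on N E"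
  shows "smooth_on M F"
proof -
  obtain f where f: "f \<in> measurable N (borel :: real measure)"
    and E: "\<And>x y. x \<in> space N \<Longrightarrow> y \<in> space N \<Longrightarrow> E x y \<longleftrightarrow> f x = f y"
    using \<open>smooth_on N E\<close> unfolding smooth_on_def by blast
  have "f \<circ> \<phi> \<in> measurable M borel"
    using \<phi> f by (rule measurable_comp)
  moreover have "F x y \<longleftrightarrow> (f \<circ> \<phi>) x = (f \<circ> \<phi>) y" if "x \<in> space M" "y \<in> space M" for x y
    using reduction[OF that] E measurable_space[OF \<phi>] that by simp
  ultimately show ?thesis
    unfolding smooth_on_def by blast
qed


section \<open>The relation \<open>E\<^sub>0\<close> is not smooth\<close>

definition E0 :: "(nat \<Rightarrow> bool) \<Rightarrow> (nat \<Rightarrow> bool) \<Rightarrow> bool" where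
  "E0 x y \<longleftrightarrow> finite {i. x i \<noteq> y i}"

lemma countable_E0_class: "countable {y. E0 x y}"
proof -
  have "{y. E0 x y} \<subseteq> (\<lambda>F i. if i \<in> F then \<not> x i else x i) ` Collect finite"
  proof
    fix y assume "y \<in> {y. E0 x y}"
    then show "y \<in> (\<lambda>F i. if i \<in> F then \<not> x i else x i) ` Collect finite"
      by (intro image_eqI[of _ _ "{i. x i \<noteq> y i}"]) (auto simp: E0_def)
  qed
  then show ?thesis
    by (rule countable_subset) (intro countable_image countable_Collect_finite)
qed

definition fair_coin :: "bool measure" where
  "fair_coin = measure_pmf (bernoulli_pmf (1/2))"

definition coin_flips :: "(nat \<Rightarrow> bool) measure" where
  "coin_flips = (\<Pi>\<^sub>M i\<in>UNIV. fair_coin)"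

lemma space_fair_coin [simp]: "space fair_coin = UNIV"
  and sets_fair_coin [simp]: "sets fair_coin = UNIV"
  and prob_space_fair_coin: "prob_space fair_coin"
  by (simp_all add: fair_coin_def prob_space_measure_pmf)

lemma space_coin_flips [simp]: "space coin_flips = UNIV"
  by (simp add: coin_flips_def space_PiM)

lemma sets_coin_flips: "sets coin_flips = sets (borel :: (nat \<Rightarrow> bool) measure)"
  unfolding sets_borel_cantor coin_flips_def by (rule sets_PiM_cong) simp_all

interpretation coin_flips: prob_space coin_flips
  unfolding coin_flips_def by (rule prob_space_PiM) (rule prob_space_fair_coin)

lemma null_sets_coin_flips_singleton: "{y} \<in> null_sets coin_flips"
proof -
  define cylinder where
    "cylinder n = prod_emb UNIV (\<lambda>_. fair_coin) {..<n} (\<Pi>\<^sub>E i\<in>{..<n}. {y i})" for n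
  have cylinder_sets: "cylinder n \<in> sets coin_flips" for n
    unfolding cylinder_def coin_flips_def by (rule sets_PiM_I) auto
  have fair: "emeasure fair_coin {b} = ennreal (1/2)" for b
    by (cases b) (simp_all add: fair_coin_def emeasure_pmf_single)
  have "emeasure coin_flips (cylinder n) = (\<Prod>i<n. emeasure fair_coin {y i})" for n
    unfolding cylinder_def coin_flips_def by (rule emeasure_PiM_emb) (auto simp: prob_space_fair_coin)
  also have "\<dots> n = ennreal (1/2) ^ n" for n
    by (simp only: fair prod_constant card_lessThan)
  also have "\<dots> n = ennreal ((1/2) ^ n)" for n
    by (rule ennreal_power) simp
  finally have measure_cylinder: "coin_flips.prob (cylinder n) = (1/2) ^ n" for n
    by (simp add: measure_def)
  have mem_cylinder: "z \<in> cylinder n \<longleftrightarrow> (\<forall>i<n. z i = y i)" for z n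
    by (simp add: cylinder_def prod_emb_def space_PiM PiE_iff Ball_def)
  have singleton: "{y} = (\<Inter>n. cylinder n)"
    by (auto simp: mem_cylinder fun_eq_iff) (meson lessI)+
  then have "{y} \<in> sets coin_flips"
    using cylinder_sets by auto
  have "coin_flips.prob {y} \<le> (1/2) ^ n" for n
    unfolding measure_cylinder[symmetric] singleton using cylinder_sets
    by (intro coin_flips.finite_measure_mono) auto
  moreover have "(\<lambda>n. (1/2::real) ^ n) \<longlonglongrightarrow> 0"
    by (rule LIMSEQ_realpow_zero) auto
  ultimately have "coin_flips.prob {y} \<le> 0"
    by (intro LIMSEQ_le_const) auto
  then show ?thesis
    using \<open>{y} \<in> sets coin_flips\<close> by (simp add: null_setsI coin_flips.emeasure_eq_measure measure_nonneg antisym)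
qed

lemma countable_null_coin_flips: "countable C \<Longrightarrow> C \<in> null_sets coin_flips"
proof -
  assume "countable C"
  then have "(\<Union>y\<in>C. {y}) \<in> null_sets coin_flips"
    by (rule null_sets_UN') (rule null_sets_coin_flips_singleton)
  then show ?thesis by simp
qed

definition coordinate_events :: "nat \<Rightarrow> (nat \<Rightarrow> bool) set set" where
  "coordinate_events i =
     sigma_sets (space coin_flips) {(\<lambda>x. x i) -` A \<inter> space coin_flips | A. A \<in> sets fair_coin}"

lemma indep_coordinate_events: "coin_flips.indep_sets coordinate_events UNIV"
proof -
  have "distr coin_flips fair_coin (\<lambda>x. x i) = fair_coin" for i
    unfolding coin_flips_def by (rule distr_PiM_component) (auto simp: prob_space_fair_coin)
  moreover have "(\<lambda>x. \<lambda>i\<in>UNIV. x i) = (\<lambda>x::nat \<Rightarrow> bool. x)"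
    by (simp add: restrict_def)
  ultimately have "coin_flips.indep_vars (\<lambda>_. fair_coin) (\<lambda>i x. x i) UNIV"
    by (subst coin_flips.indep_vars_iff_distr_eq_PiM) (simp_all add: coin_flips_def)
  then show ?thesis
    unfolding coin_flips.indep_vars_def coordinate_events_def by simp
qed

text \<open>An \<open>E\<^sub>0\<close>-invariant set is invariant under resetting the first \<open>n\<close> coin flips, so it is
  determined by the coordinates from \<open>n\<close> on.\<close>

lemma E0_invariant_in_tail_events:
  assumes S: "S \<in> sets coin_flips" and invariant: "\<And>x y. x \<in> S \<Longrightarrow> E0 x y \<Longrightarrow> y \<in> S"
  shows "S \<in> coin_flips.tail_events coordinate_events"
  unfolding coin_flips.tail_events_def
proof
  fix n
  define N where "N = sigma (space coin_flips) (\<Union> (coordinate_events ` {n..}))"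
  have sets_N: "sets N = sigma_sets (space coin_flips) (\<Union> (coordinate_events ` {n..}))"
    unfolding N_def by (rule sets_measure_of) auto
  define reset where "reset x i = (if i < n then False else x i)" for x :: "nat \<Rightarrow> bool" and i
  have "reset \<in> measurable N coin_flips"
    unfolding coin_flips_def
  proof (rule measurable_PiM_single')
    fix i
    have "(\<lambda>x. x i) \<in> measurable N fair_coin" if "n \<le> i"
    proof (rule measurableI)
      fix A :: "bool set"
      have "(\<lambda>x. x i) -` A \<inter> space coin_flips \<in> coordinate_events i"
        unfolding coordinate_events_def by (intro sigma_sets.Basic) auto
      then show "(\<lambda>x. x i) -` A \<inter> space N \<in> sets N"
        using that unfolding sets_N by (auto simp: N_def intro: sigma_sets.Basic)
    qed simp
    then show "(\<lambda>x. reset x i) \<in> measurable N fair_coin"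
      by (cases "i < n") (simp_all add: reset_def)
  qed simp
  then have "reset -` S \<inter> space N \<in> sets N"
    using S by (rule measurable_sets)
  moreover have "E0 x (reset x)" "E0 (reset x) x" for x
    unfolding E0_def by (auto intro: finite_subset[of _ "{..<n}"] simp: reset_def)
  then have "reset -` S \<inter> space N = S"
    using invariant by (auto simp: N_def)
  ultimately show "S \<in> sigma_sets (space coin_flips) (\<Union> (coordinate_events ` {n..}))"
    by (simp add: sets_N)
qed

lemma E0_invariant_prob_0_or_1:
  assumes "S \<in> sets coin_flips" and "\<And>x y. x \<in> S \<Longrightarrow> E0 x y \<Longrightarrow> y \<in> S"
  shows "coin_flips.prob S = 0 \<or> coin_flips.prob S = 1"
proof (rule coin_flips.kolmogorov_0_1_law)
  show "sigma_algebra (space coin_flips) (coordinate_events i)" for i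
    unfolding coordinate_events_def by (rule sigma_algebra_sigma_sets) auto
qed (use assms indep_coordinate_events E0_invariant_in_tail_events in auto)

lemma eq_if_same_rat_upper_bounds:
  fixes a b :: real
  assumes "\<And>q::rat. a \<le> of_rat q \<longleftrightarrow> b \<le> of_rat q"
  shows "a = b"
proof (rule ccontr)
  assume "a \<noteq> b"
  then have "min a b < max a b"
    by (simp add: min_def max_def)
  then obtain q where "min a b < of_rat q" "of_rat q < max a b"
    using of_rat_dense by blast
  then show False
    using assms[of q] by (cases "a \<le> b") (simp_all add: min_def max_def)
qed

text \<open>Each level set \<open>{g \<le> q}\<close>, \<open>q\<close> rational, is \<open>E\<^sub>0\<close>-invariant and hence null or conull; a point
  lying on the conull side for all \<open>q\<close> at once yields the almost sure value of \<open>g\<close>.\<close>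

lemma E0_invariant_AE_constant:
  fixes g :: "(nat \<Rightarrow> bool) \<Rightarrow> real"
  assumes g: "g \<in> borel_measurable coin_flips" and invariant: "\<And>x y. E0 x y \<Longrightarrow> g x = g y"
  shows "\<exists>c. AE x in coin_flips. g x = c"
proof -
  define P where "P q \<longleftrightarrow> coin_flips.prob {x. g x \<le> of_rat q} = 1" for q :: rat
  have "AE x in coin_flips. g x \<le> of_rat q \<longleftrightarrow> P q" for q
  proof -
    let ?S = "{x. g x \<le> of_rat q}"
    have "{x \<in> space coin_flips. g x \<le> of_rat q} \<in> sets coin_flips"
      using g by measurable
    then have S: "?S \<in> sets coin_flips"
      by simp
    have "coin_flips.prob ?S = 0 \<or> coin_flips.prob ?S = 1"
      using S invariant by (intro E0_invariant_prob_0_or_1) auto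
    then show ?thesis
    proof
      assume "coin_flips.prob ?S = 0"
      then have "coin_flips.prob (space coin_flips - ?S) = 1"
        using coin_flips.prob_compl[OF S] by simp
      then show ?thesis
        using \<open>coin_flips.prob ?S = 0\<close> by (auto simp: P_def dest: coin_flips.AE_prob_1)
    qed (auto simp: P_def dest: coin_flips.AE_prob_1)
  qed
  then have levels: "AE x in coin_flips. \<forall>q. g x \<le> of_rat q \<longleftrightarrow> P q"
    by (simp add: AE_all_countable)
  then obtain x0 where x0: "\<forall>q. g x0 \<le> of_rat q \<longleftrightarrow> P q"
    using eventually_happens'[OF coin_flips.ae_filter_bot] by blast
  from levels have "AE x in coin_flips. g x = g x0"
    by eventually_elim (auto intro: eq_if_same_rat_upper_bounds simp: x0)
  then show ?thesis by blast
qed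

theorem E0_not_smooth: "\<not> smooth_on (borel :: (nat \<Rightarrow> bool) measure) E0"
proof
  assume "smooth_on borel E0"
  then obtain f where f: "f \<in> measurable borel (borel :: real measure)"
    and reduction: "\<And>x y. E0 x y \<longleftrightarrow> f x = f y"
    unfolding smooth_on_def by auto
  have "f \<in> borel_measurable coin_flips"
    using f by (simp cong: measurable_cong_sets add: sets_coin_flips)
  then obtain c where c: "AE x in coin_flips. f x = c"
    using E0_invariant_AE_constant reduction by blast
  then obtain x0 where x0: "f x0 = c"
    using eventually_happens'[OF coin_flips.ae_filter_bot] by blast
  from c have "AE x in coin_flips. x \<in> {y. E0 x0 y}"
    by eventually_elim (simp add: reduction x0)
  moreover have "AE x in coin_flips. x \<notin> {y. E0 x0 y}"
    by (intro AE_not_in countable_null_coin_flips countable_E0_class)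
  ultimately show False
    by (rule coin_flips.AE_contr)
qed


section \<open>A Heisenberg group over the finite subsets of \<open>\<nat>\<close>\<close>

type_synonym heis = "nat set \<times> nat set \<times> nat set"

text \<open>\<open>(a, b, c)\<close> is the unitriangular matrix \<open>[[1, a, c], [0, 1, b], [0, 0, 1]]\<close> over the Boolean ring
  of finite sets, with addition \<open>sym_diff\<close> and multiplication \<open>\<inter>\<close>.\<close>

fun heis_mult :: "heis \<Rightarrow> heis \<Rightarrow> heis" where
  "heis_mult (a, b, c) (a', b', c') = (sym_diff a a', sym_diff b b', sym_diff (sym_diff c c') (a \<inter> b'))"

fun heis_inv :: "heis \<Rightarrow> heis" where
  "heis_inv (a, b, c) = (a, b, sym_diff c (a \<inter> b))"

fun heis_finite :: "heis \<Rightarrow> bool" where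
  "heis_finite (a, b, c) \<longleftrightarrow> finite a \<and> finite b \<and> finite c"

definition heis_encode :: "heis \<Rightarrow> nat" where
  "heis_encode x = (case x of (a, b, c) \<Rightarrow> prod_encode (set_encode a, prod_encode (set_encode b, set_encode c)))"

definition heis_decode :: "nat \<Rightarrow> heis" where
  "heis_decode n = (case prod_decode n of (i, j) \<Rightarrow> case prod_decode j of (k, l) \<Rightarrow>
     (set_decode i, set_decode k, set_decode l))"

lemma heis_finite_decode [simp]: "heis_finite (heis_decode n)"
  by (simp add: heis_decode_def finite_set_decode split: prod.split)

lemma heis_decode_encode [simp]: "heis_finite x \<Longrightarrow> heis_decode (heis_encode x) = x"
  by (cases x) (simp add: heis_encode_def heis_decode_def set_encode_inverse)

lemma heis_encode_decode [simp]: "heis_encode (heis_decode n) = n"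
  by (simp add: heis_encode_def heis_decode_def set_decode_inverse split: prod.split)
     (metis prod_decode_inverse)

lemma heis_decode_inject: "heis_decode m = heis_decode n \<longleftrightarrow> m = n"
  by (metis heis_encode_decode)

lemma heis_finite_mult [simp]: "heis_finite x \<Longrightarrow> heis_finite y \<Longrightarrow> heis_finite (heis_mult x y)"
  by (cases x; cases y) simp

lemma heis_finite_inv [simp]: "heis_finite x \<Longrightarrow> heis_finite (heis_inv x)"
  by (cases x) simp

lemma heis_mult_assoc: "heis_mult (heis_mult x y) z = heis_mult x (heis_mult y z)"
  by (cases x; cases y; cases z) (simp add: set_eq_iff; blast)

lemma heis_mult_one_left: "heis_mult ({}, {}, {}) x = x"
  by (cases x) simp

lemma heis_mult_inv_left: "heis_mult (heis_inv x) x = ({}, {}, {})"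
  by (cases x) (simp add: set_eq_iff; blast)

definition Heis :: "nat monoid" where
  "Heis = \<lparr>carrier = UNIV, mult = (\<lambda>m n. heis_encode (heis_mult (heis_decode m) (heis_decode n))),
           one = heis_encode ({}, {}, {})\<rparr>"

lemma carrier_Heis [simp]: "carrier Heis = UNIV"
  by (simp add: Heis_def)

lemma heis_decode_Heis_mult [simp]: "heis_decode (m \<otimes>\<^bsub>Heis\<^esub> n) = heis_mult (heis_decode m) (heis_decode n)"
  by (simp add: Heis_def)

lemma heis_decode_Heis_one [simp]: "heis_decode \<one>\<^bsub>Heis\<^esub> = ({}, {}, {})"
  by (simp add: Heis_def)

lemma group_Heis: "group Heis"
proof (rule groupI)
  fix m n k :: nat
  show "m \<otimes>\<^bsub>Heis\<^esub> n \<otimes>\<^bsub>Heis\<^esub> k = m \<otimes>\<^bsub>Heis\<^esub> (n \<otimes>\<^bsub>Heis\<^esub> k)"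
    by (simp flip: heis_decode_inject add: heis_mult_assoc)
  show "\<one>\<^bsub>Heis\<^esub> \<otimes>\<^bsub>Heis\<^esub> m = m"
    by (simp flip: heis_decode_inject add: heis_mult_one_left)
  show "\<exists>n\<in>carrier Heis. n \<otimes>\<^bsub>Heis\<^esub> m = \<one>\<^bsub>Heis\<^esub>"
    by (intro bexI[of _ "heis_encode (heis_inv (heis_decode m))"])
       (simp_all flip: heis_decode_inject add: heis_mult_inv_left)
qed simp_all

lemma heis_decode_Heis_inv [simp]: "heis_decode (inv\<^bsub>Heis\<^esub> n) = heis_inv (heis_decode n)"
proof -
  have "inv\<^bsub>Heis\<^esub> n = heis_encode (heis_inv (heis_decode n))"
    by (rule group.inv_equality[OF group_Heis])
       (simp_all flip: heis_decode_inject add: heis_mult_inv_left)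
  then show ?thesis by simp
qed

lemma heis_decode_commutator:
  assumes "heis_decode m = (a, b, c)" and "heis_decode n = (a', b', c')"
  shows "heis_decode (grp_commutator Heis m n) = ({}, {}, sym_diff (a \<inter> b') (a' \<inter> b))"
  using assms by (simp add: grp_commutator_def set_eq_iff; blast)

lemma heis_decode_conjugate:
  assumes "heis_decode g = (a, b, c)" and "heis_decode h = (a', b', c')"
  shows "heis_decode (g \<otimes>\<^bsub>Heis\<^esub> h \<otimes>\<^bsub>Heis\<^esub> inv\<^bsub>Heis\<^esub> g) =
    (a', b', sym_diff (sym_diff c' (a \<inter> b')) (a' \<inter> b))"
  using assms by (simp add: set_eq_iff; blast)


section \<open>Nilpotency class 2\<close>

lemma (in group) lcs_2_eq_one:
  assumes "subgroup Z G"
    and commutator_in: "\<And>x y. x \<in> carrier G \<Longrightarrow> y \<in> carrier G \<Longrightarrow> grp_commutator G x y \<in> Z"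
    and central: "\<And>z y. z \<in> Z \<Longrightarrow> y \<in> carrier G \<Longrightarrow> grp_commutator G z y = \<one>"
  shows "lcs G 2 = {\<one>}"
proof -
  have "lcs G (Suc 0) \<subseteq> Z"
    using commutator_in by (auto intro!: generate_subgroup_incl[OF _ \<open>subgroup Z G\<close>])
  then have "{grp_commutator G x y | x y. x \<in> lcs G (Suc 0) \<and> y \<in> carrier G} \<subseteq> {\<one>}"
    using central by blast
  then have "lcs G 2 \<subseteq> {\<one>}"
    by (simp add: numeral_2_eq_2 generate_subgroup_incl[OF _ triv_subgroup])
  moreover have "\<one> \<in> lcs G 2"
    by (simp add: numeral_2_eq_2 generate.one)
  ultimately show ?thesis by blast
qed

lemma (in group) nilpotent_of_class_2I:
  assumes "lcs G 2 = {\<one>}" and "x \<in> carrier G" "y \<in> carrier G" "grp_commutator G x y \<noteq> \<one>"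
  shows "nilpotent_of_class G 2"
proof -
  have "grp_commutator G x y \<in> lcs G (Suc 0)"
    using assms(2,3) by (auto intro: generate.incl)
  moreover have "grp_commutator G x y \<in> lcs G 0"
    using assms(2,3) by (simp add: grp_commutator_def)
  ultimately have "lcs G k \<noteq> {\<one>}" if "k < 2" for k
    using less_2_cases[OF that] assms(4) by fastforce
  then show ?thesis
    unfolding nilpotent_of_class_def using is_group assms(1) by blast
qed

definition heis_centre :: "nat set" where
  "heis_centre = {n. \<exists>c. heis_decode n = ({}, {}, c)}"

lemma subgroup_heis_centre: "subgroup heis_centre Heis"
proof (rule group.subgroupI[OF group_Heis])
  show "heis_centre \<noteq> {}"
    using heis_decode_Heis_one unfolding heis_centre_def by blast
qed (auto simp: heis_centre_def)

lemma nilpotent_of_class_Heis: "nilpotent_of_class Heis 2"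
proof (rule group.nilpotent_of_class_2I[OF group_Heis])
  show "lcs Heis 2 = {\<one>\<^bsub>Heis\<^esub>}"
  proof (rule group.lcs_2_eq_one[OF group_Heis subgroup_heis_centre])
    show "grp_commutator Heis m n \<in> heis_centre" for m n
      unfolding heis_centre_def
      using heis_decode_commutator[of m _ _ _ n] by (cases "heis_decode m"; cases "heis_decode n") auto
    show "grp_commutator Heis z n = \<one>\<^bsub>Heis\<^esub>" if "z \<in> heis_centre" for z n
      using that heis_decode_commutator[of z _ _ _ n] unfolding heis_centre_def
      by (cases "heis_decode n") (auto simp flip: heis_decode_inject)
  qed
  have "heis_decode (grp_commutator Heis (heis_encode ({0}, {}, {})) (heis_encode ({}, {0}, {}))) = ({}, {}, {0})"
    by (simp add: heis_decode_commutator[of _ "{0}" "{}" "{}" _ "{}" "{0}" "{}"])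
  then show "grp_commutator Heis (heis_encode ({0}, {}, {})) (heis_encode ({}, {0}, {})) \<noteq> \<one>\<^bsub>Heis\<^esub>"
    by (auto simp flip: heis_decode_inject)
qed simp_all


section \<open>Graph subgroups\<close>

definition graph_subgroup :: "(nat \<Rightarrow> bool) \<Rightarrow> nat set" where
  "graph_subgroup x = {n. \<exists>b. heis_decode n = ({}, b, {i \<in> b. x i})}"

lemma heis_encode_in_graph_subgroup: "finite b \<Longrightarrow> heis_encode ({}, b, {i \<in> b. x i}) \<in> graph_subgroup x"
  by (simp add: graph_subgroup_def)

lemma mem_graph_subgroup_iff:
  assumes "heis_decode n = (a, b, c)"
  shows "n \<in> graph_subgroup x \<longleftrightarrow> a = {} \<and> c \<subseteq> b \<and> (\<forall>i\<in>b. x i \<longleftrightarrow> i \<in> c)"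
  using assms by (auto simp: graph_subgroup_def)

lemma subgroup_graph_subgroup: "subgroup (graph_subgroup x) Heis"
proof (rule group.subgroupI[OF group_Heis])
  show "graph_subgroup x \<noteq> {}"
    using heis_encode_in_graph_subgroup[of "{}" x] by blast
  fix m n
  assume "m \<in> graph_subgroup x" "n \<in> graph_subgroup x"
  then obtain b b' where m: "heis_decode m = ({}, b, {i \<in> b. x i})"
    and n: "heis_decode n = ({}, b', {i \<in> b'. x i})"
    by (auto simp: graph_subgroup_def)
  have "heis_decode (inv\<^bsub>Heis\<^esub> m) = ({}, b, {i \<in> b. x i})"
    using m by simp
  moreover have "heis_decode (m \<otimes>\<^bsub>Heis\<^esub> n) = ({}, sym_diff b b', {i \<in> sym_diff b b'. x i})"
    using m n by (simp add: set_eq_iff; blast)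
  ultimately show "inv\<^bsub>Heis\<^esub> m \<in> graph_subgroup x" "m \<otimes>\<^bsub>Heis\<^esub> n \<in> graph_subgroup x"
    unfolding graph_subgroup_def by blast+
qed simp

lemma graph_subgroup_inject: "graph_subgroup x = graph_subgroup y \<Longrightarrow> x = y"
proof
  fix i
  assume "graph_subgroup x = graph_subgroup y"
  then have "heis_encode ({}, {i}, {j \<in> {i}. x j}) \<in> graph_subgroup y"
    using heis_encode_in_graph_subgroup[of "{i}" x] by simp
  then show "x i = y i"
    by (auto simp: graph_subgroup_def)
qed

lemma conjugate_graph_subgroup:
  assumes g: "heis_decode g = (a, b, c)"
  shows "(\<lambda>h. g \<otimes>\<^bsub>Heis\<^esub> h \<otimes>\<^bsub>Heis\<^esub> inv\<^bsub>Heis\<^esub> g) ` graph_subgroup x = graph_subgroup (\<lambda>i. x i \<noteq> (i \<in> a))"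
    (is "?conj ` _ = graph_subgroup ?y")
proof (intro equalityI subsetI)
  have conj: "heis_decode (?conj h) = ({}, b', {i \<in> b'. ?y i})" if "heis_decode h = ({}, b', {i \<in> b'. x i})" for h b'
    using heis_decode_conjugate[OF g that] by (simp add: set_eq_iff; blast)
  show "n \<in> graph_subgroup ?y" if "n \<in> ?conj ` graph_subgroup x" for n
    using that conj unfolding graph_subgroup_def by blast
  fix n
  assume "n \<in> graph_subgroup ?y"
  then obtain b' where n: "heis_decode n = ({}, b', {i \<in> b'. ?y i})"
    by (auto simp: graph_subgroup_def)
  then have "finite b'"
    using heis_finite_decode[of n] by simp
  then have "heis_encode ({}, b', {i \<in> b'. x i}) \<in> graph_subgroup x"
    and "?conj (heis_encode ({}, b', {i \<in> b'. x i})) = n"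
    using conj[of "heis_encode ({}, b', {i \<in> b'. x i})" b'] n
    by (simp_all add: heis_encode_in_graph_subgroup flip: heis_decode_inject)
  then show "n \<in> ?conj ` graph_subgroup x" by blast
qed

lemma subgroup_conj_graph_subgroup_iff:
  "subgroup_conj Heis (\<lambda>n. n \<in> graph_subgroup x) (\<lambda>n. n \<in> graph_subgroup y) \<longleftrightarrow> E0 x y"
proof
  assume "subgroup_conj Heis (\<lambda>n. n \<in> graph_subgroup x) (\<lambda>n. n \<in> graph_subgroup y)"
  then obtain g where "(\<lambda>h. g \<otimes>\<^bsub>Heis\<^esub> h \<otimes>\<^bsub>Heis\<^esub> inv\<^bsub>Heis\<^esub> g) ` graph_subgroup x = graph_subgroup y"
    unfolding subgroup_conj_def by auto
  moreover obtain a b c where g: "heis_decode g = (a, b, c)"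
    by (cases "heis_decode g")
  ultimately have "y = (\<lambda>i. x i \<noteq> (i \<in> a))"
    by (simp add: conjugate_graph_subgroup graph_subgroup_inject)
  moreover have "finite a"
    using heis_finite_decode[of g] g by simp
  ultimately show "E0 x y"
    unfolding E0_def by (auto elim: rev_finite_subset)
next
  assume "E0 x y"
  define a where "a = {i. x i \<noteq> y i}"
  have "heis_decode (heis_encode (a, {}, {})) = (a, {}, {})"
    using \<open>E0 x y\<close> by (simp add: E0_def a_def)
  moreover have "(\<lambda>i. x i \<noteq> (i \<in> a)) = y"
    by (auto simp: a_def)
  ultimately have "(\<lambda>h. heis_encode (a, {}, {}) \<otimes>\<^bsub>Heis\<^esub> h \<otimes>\<^bsub>Heis\<^esub> inv\<^bsub>Heis\<^esub> heis_encode (a, {}, {}))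
      ` graph_subgroup x = graph_subgroup y"
    by (metis conjugate_graph_subgroup)
  then show "subgroup_conj Heis (\<lambda>n. n \<in> graph_subgroup x) (\<lambda>n. n \<in> graph_subgroup y)"
    unfolding subgroup_conj_def by auto
qed

lemma measurable_graph_subgroup:
  "(\<lambda>x n. n \<in> graph_subgroup x) \<in> measurable (borel :: (nat \<Rightarrow> bool) measure) borel"
proof -
  have "(\<lambda>x n. n \<in> graph_subgroup x) \<in>
      measurable (\<Pi>\<^sub>M i\<in>UNIV. count_space UNIV) (\<Pi>\<^sub>M i\<in>UNIV. count_space UNIV)"
  proof (rule measurable_PiM_single')
    fix n
    obtain a b c where n: "heis_decode n = (a, b, c)"
      by (cases "heis_decode n")
    then have "finite b"
      using heis_finite_decode[of n] by simp
    then show "(\<lambda>x. n \<in> graph_subgroup x) \<in> measurable (\<Pi>\<^sub>M i\<in>UNIV. count_space UNIV) (count_space UNIV)"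
      unfolding mem_graph_subgroup_iff[OF n] by measurable
  qed simp
  then show ?thesis
    by (simp cong: measurable_cong_sets add: sets_borel_cantor)
qed

theorem proposition8p3:
  shows "\<exists>G :: nat monoid. group G \<and> countable (carrier G) \<and> nilpotent_of_class G 2 \<and>
           \<not> smooth_on (Sub_measurable G) (subgroup_conj G)"
proof (intro exI conjI notI)
  show "group Heis" "countable (carrier Heis)" "nilpotent_of_class Heis 2"
    by (simp_all add: group_Heis nilpotent_of_class_Heis)
  assume smooth: "smooth_on (Sub_measurable Heis) (subgroup_conj Heis)"
  have "(\<lambda>x n. n \<in> graph_subgroup x) \<in> measurable borel (Sub_measurable Heis)"
    unfolding Sub_measurable_def using subgroup_graph_subgroup
    by (intro measurable_restrict_space2 measurable_graph_subgroup) (auto simp: Sub_space_def)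
  then have "smooth_on borel E0"
    by (rule smooth_on_pullback[OF _ _ smooth]) (rule subgroup_conj_graph_subgroup_iff)
  then show False
    using E0_not_smooth by blast
qed

end
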